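(* Let $B$ be a commutative ring with identity and $A$ a subring of $B$ containing the identity. Suppose $A$ is a pm-ring, $A$ is a dense subring of $B$, and $A$ is a weak completely normal subring of $B$. Then the maximal spectrum $\operatorname{Max}(A)$ is homeomorphic to $\operatorname{Max}(B)$.
   Context: All rings are commutative with identity; subrings contain the identity. $\operatorname{spec} R$ is the set of prime ideals of $R$ with the Zariski topology, and $\operatorname{Max}(R)$ is the subspace of maximal ideals. A pm-ring is a ring in which every prime ideal is contained in a unique maximal ideal. A subring $A$ of $B$ is dense in $B$ if for every ideal $I$ of $B$ and every $b\in B\setminus \operatorname{rad}(I)$ there exists $a\in B\setminus\operatorname{rad}(I)$ with $ab\in A$. A subring $A$ of $B$ is a weak completely normal subring of $B$ if for any two distinct maximal ideals $M\neq M'$ of $B$ such that $M\cap A$ and $M'\cap A$ are non-comparable (under inclusion), $\operatorname{cl}_{\operatorname{spec} A}\{M\cap A\}\cap \operatorname{cl}_{\operatorname{spec} A}\{M'\cap A\}=\emptyset$. *)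

theory Defs
  imports "HOL-Analysis.Analysis" "HOL-Algebra.Algebra"
begin

definition Spec :: "('a, 'b) ring_scheme \<Rightarrow> 'a set set" where
  "Spec R = {P. primeideal P R}"

definition MaxSpec :: "('a, 'b) ring_scheme \<Rightarrow> 'a set set" where
  "MaxSpec R = {M. maximalideal M R}"

definition zariski_V :: "('a, 'b) ring_scheme \<Rightarrow> 'a set \<Rightarrow> 'a set set" where
  "zariski_V R S = {P \<in> Spec R. S \<subseteq> P}"

text \<open>The Zariski topology on Spec R: its open sets are the complements Spec R - V(S),
  S a subset of R (these already form a topology; we take the topology they generate).\<close>
definition zariski :: "('a, 'b) ring_scheme \<Rightarrow> 'a set topology" where
  "zariski R = topology_generated_by {Spec R - zariski_V R S | S. S \<subseteq> carrier R}"

definition max_zariski :: "('a, 'b) ring_scheme \<Rightarrow> 'a set topology" where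
  "max_zariski R = subtopology (zariski R) (MaxSpec R)"

definition ring_rad :: "('a, 'b) ring_scheme \<Rightarrow> 'a set \<Rightarrow> 'a set" where
  "ring_rad R I = {x \<in> carrier R. \<exists>n::nat. x [^]\<^bsub>R\<^esub> n \<in> I}"

definition pm_ring :: "('a, 'b) ring_scheme \<Rightarrow> bool" where
  "pm_ring R \<longleftrightarrow> (\<forall>P. primeideal P R \<longrightarrow> (\<exists>!M. maximalideal M R \<and> P \<subseteq> M))"

definition dense_subring :: "'a set \<Rightarrow> ('a, 'b) ring_scheme \<Rightarrow> bool" where
  "dense_subring A B \<longleftrightarrow>
     (\<forall>I b. ideal I B \<longrightarrow> b \<in> carrier B - ring_rad B I \<longrightarrow>
        (\<exists>a \<in> carrier B - ring_rad B I. a \<otimes>\<^bsub>B\<^esub> b \<in> A))"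

definition weak_completely_normal_subring :: "'a set \<Rightarrow> ('a, 'b) ring_scheme \<Rightarrow> bool" where
  "weak_completely_normal_subring A B \<longleftrightarrow>
     (\<forall>M M'. maximalideal M B \<longrightarrow> maximalideal M' B \<longrightarrow> M \<noteq> M' \<longrightarrow>
        \<not> (M \<inter> A \<subseteq> M' \<inter> A) \<longrightarrow> \<not> (M' \<inter> A \<subseteq> M \<inter> A) \<longrightarrow>
        (zariski (B\<lparr>carrier := A\<rparr>) closure_of {M \<inter> A}) \<inter>
        (zariski (B\<lparr>carrier := A\<rparr>) closure_of {M' \<inter> A}) = {})"

end

theory Submission
  imports Defs
begin

(* Send a maximal ideal M of B to the unique maximal ideal of the pm-ring A containing the
   prime M \<inter> A. The map is onto: for N maximal in A, a prime of B avoiding the multiplicative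
   set A - N contracts into N, and by the pm-property so does any maximal ideal above it.
   It is one-to-one: by density, distinct maximal ideals of B have incomparable contractions,
   so by weak complete normality their closures in Spec A are disjoint, while a maximal ideal
   of A containing both contractions would lie in both closures.
   Both directions of continuity rest on the separation property of pm-rings: distinct maximal
   ideals M, N admit a outside M and c outside N with a c = 0. It yields, for s outside a
   maximal ideal N, some a outside N and some r with a (s r) = a, and the basic open set of
   a is the neighbourhood needed for continuity. *)

lemma (in primeideal) one_notin: "\<one> \<notin> I"
  using I_notcarr one_imp_carrier by blast

lemma (in primeideal) submonoid_complement: "submonoid (carrier R - I) R"
  by (rule submonoid.intro) (use I_prime one_notin in auto)

lemma (in primeideal) ring_rad_eq: "ring_rad R I = I"
proof -
  have "x \<in> I" if x: "x \<in> carrier R" and "x [^] n \<in> I" for x and n :: nat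
    using that(2)
  proof (induction n)
    case 0
    then show ?case using one_notin by simp
  next
    case (Suc n)
    then have "x [^] n \<in> I \<or> x \<in> I"
      using I_prime[of "x [^] n" x] x by simp
    then show ?case using Suc.IH by blast
  qed
  moreover have "x [^] (1::nat) \<in> I" if "x \<in> I" for x
    using that Icarr by simp
  ultimately show ?thesis
    unfolding ring_rad_def using Icarr by blast
qed

lemma (in ring) exists_ideal_maximal_avoiding:
  assumes "ideal I R" and "I \<inter> S = {}"
  obtains P where "ideal P R" "I \<subseteq> P" "P \<inter> S = {}"
    and "\<And>J. \<lbrakk>ideal J R; P \<subseteq> J; J \<inter> S = {}\<rbrakk> \<Longrightarrow> J = P"
proof -
  let ?\<I> = "{J. ideal J R \<and> I \<subseteq> J \<and> J \<inter> S = {}}"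
  have "\<exists>P\<in>?\<I>. \<forall>J\<in>?\<I>. P \<subseteq> J \<longrightarrow> J = P"
  proof (rule subset_Zorn)
    fix C assume C: "subset.chain ?\<I> C"
    show "\<exists>U\<in>?\<I>. \<forall>J\<in>C. J \<subseteq> U"
    proof (cases "C = {}")
      case True
      then show ?thesis using assms by auto
    next
      case False
      have "subset.chain {J. ideal J R} C"
        using C unfolding pred_on.chain_def by auto
      from chain_Union_is_ideal[OF this] have "ideal (\<Union>C) R"
        using False by simp
      moreover have "I \<subseteq> \<Union>C" "\<Union>C \<inter> S = {}"
        using C False unfolding pred_on.chain_def by blast+
      ultimately show ?thesis
        by blast
    qed
  qed
  then show ?thesis
    using that by auto
qed

lemma (in ring) exists_maximalideal:
  assumes "ideal I R" and "\<one> \<notin> I"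
  obtains M where "maximalideal M R" "I \<subseteq> M"
proof -
  obtain M where M: "ideal M R" "I \<subseteq> M" "M \<inter> {\<one>} = {}"
    and max: "\<And>J. \<lbrakk>ideal J R; M \<subseteq> J; J \<inter> {\<one>} = {}\<rbrakk> \<Longrightarrow> J = M"
    using exists_ideal_maximal_avoiding[OF assms(1), of "{\<one>}"] assms(2) by blast
  have "maximalideal M R"
  proof (rule maximalidealI[OF M(1)])
    show "carrier R \<noteq> M" using M(3) by auto
    fix J assume J: "ideal J R" "M \<subseteq> J" "J \<subseteq> carrier R"
    show "J = M \<or> J = carrier R"
    proof (cases "\<one> \<in> J")
      case True
      then show ?thesis using ideal.one_imp_carrier[OF J(1)] by simp
    next
      case False
      then show ?thesis using max[OF J(1,2)] by blast
    qed
  qed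
  with M(2) show ?thesis using that by simp
qed

lemma (in ring) set_add_cgenideal: "I <+> PIdl a = {p \<oplus> r \<otimes> a | p r. p \<in> I \<and> r \<in> carrier R}"
  unfolding set_add_def' cgenideal_def by blast

lemma (in ring) set_add_cgenideal_supset:
  assumes "ideal I R" and "a \<in> carrier R"
  shows "I \<subseteq> I <+> PIdl a" and "a \<in> I <+> PIdl a"
proof -
  show "I \<subseteq> I <+> PIdl a"
  proof
    fix p assume p: "p \<in> I"
    then have "p \<oplus> \<zero> \<otimes> a \<in> I <+> PIdl a"
      unfolding set_add_cgenideal by blast
    then show "p \<in> I <+> PIdl a"
      using ideal.Icarr[OF assms(1) p] assms(2) by simp
  qed
  have "\<zero> \<oplus> \<one> \<otimes> a \<in> I <+> PIdl a"
    unfolding set_add_cgenideal using additive_subgroup.zero_closed[OF ideal.axioms(1)[OF assms(1)]]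
    by blast
  then show "a \<in> I <+> PIdl a"
    using assms(2) by simp
qed

lemma (in cring) maximal_avoiding_extension_meets:
  assumes P: "ideal P R" and max: "\<And>J. \<lbrakk>ideal J R; P \<subseteq> J; J \<inter> S = {}\<rbrakk> \<Longrightarrow> J = P"
    and a: "a \<in> carrier R" "a \<notin> P"
  shows "\<exists>p\<in>P. \<exists>r\<in>carrier R. p \<oplus> r \<otimes> a \<in> S"
proof -
  have "P <+> PIdl a \<noteq> P"
    using set_add_cgenideal_supset(2)[OF P a(1)] a(2) by blast
  then have "(P <+> PIdl a) \<inter> S \<noteq> {}"
    using max[OF add_ideals[OF P cgenideal_ideal[OF a(1)]] set_add_cgenideal_supset(1)[OF P a(1)]]
    by blast
  then show ?thesis
    unfolding set_add_cgenideal by blast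
qed

lemma (in cring) primeideal_if_maximal_avoiding_submonoid:
  assumes P: "ideal P R" "P \<inter> S = {}" and S: "submonoid S R"
    and max: "\<And>J. \<lbrakk>ideal J R; P \<subseteq> J; J \<inter> S = {}\<rbrakk> \<Longrightarrow> J = P"
  shows "primeideal P R"
proof (rule primeidealI[OF P(1) is_cring])
  interpret P: ideal P R by fact
  show "carrier R \<noteq> P"
    using P(2) submonoid.one_closed[OF S] one_closed by blast
  fix a b assume ab: "a \<in> carrier R" "b \<in> carrier R" "a \<otimes> b \<in> P"
  show "a \<in> P \<or> b \<in> P"
  proof (rule ccontr)
    assume "\<not> (a \<in> P \<or> b \<in> P)"
    then have "a \<notin> P" "b \<notin> P"
      by simp_all
    obtain p r where pr: "p \<in> P" "r \<in> carrier R" "p \<oplus> r \<otimes> a \<in> S"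
      using maximal_avoiding_extension_meets[OF P(1) max ab(1) \<open>a \<notin> P\<close>] by blast
    obtain q s where qs: "q \<in> P" "s \<in> carrier R" "q \<oplus> s \<otimes> b \<in> S"
      using maximal_avoiding_extension_meets[OF P(1) max ab(2) \<open>b \<notin> P\<close>] by blast
    have carr: "p \<in> carrier R" "q \<in> carrier R"
      using pr(1) qs(1) by (simp_all add: P.Icarr)
    have "(p \<oplus> r \<otimes> a) \<otimes> (q \<oplus> s \<otimes> b) = p \<otimes> (q \<oplus> s \<otimes> b) \<oplus> (r \<otimes> a \<otimes> q \<oplus> (r \<otimes> s) \<otimes> (a \<otimes> b))"
      using pr(2) qs(2) ab(1,2) carr by algebra
    also have "\<dots> \<in> P"
    proof (intro P.a_closed)
      show "p \<otimes> (q \<oplus> s \<otimes> b) \<in> P"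
        using qs(2) ab(2) carr(2) by (intro P.I_r_closed[OF pr(1)]) simp
      show "r \<otimes> a \<otimes> q \<in> P"
        using pr(2) ab(1) by (intro P.I_l_closed[OF qs(1)]) simp
      show "(r \<otimes> s) \<otimes> (a \<otimes> b) \<in> P"
        using pr(2) qs(2) by (intro P.I_l_closed[OF ab(3)]) simp
    qed
    finally have "(p \<oplus> r \<otimes> a) \<otimes> (q \<oplus> s \<otimes> b) \<in> P" .
    moreover have "(p \<oplus> r \<otimes> a) \<otimes> (q \<oplus> s \<otimes> b) \<in> S"
      using pr(3) qs(3) by (rule submonoid.m_closed[OF S])
    ultimately show False
      using P(2) by (metis IntI empty_iff)
  qed
qed

lemma (in cring) exists_primeideal_avoiding_submonoid:
  assumes I: "ideal I R" and S: "submonoid S R" and IS: "I \<inter> S = {}"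
  obtains P where "primeideal P R" "I \<subseteq> P" "P \<inter> S = {}"
proof -
  obtain P where P: "ideal P R" "I \<subseteq> P" "P \<inter> S = {}"
    and max: "\<And>J. \<lbrakk>ideal J R; P \<subseteq> J; J \<inter> S = {}\<rbrakk> \<Longrightarrow> J = P"
    using exists_ideal_maximal_avoiding[OF I IS] by blast
  show ?thesis
    by (rule that[OF primeideal_if_maximal_avoiding_submonoid[OF P(1,3) S max] P(2,3)])
qed

lemma (in cring) ideal_annihilated_by_submonoid:
  assumes "submonoid T R"
  shows "ideal {c \<in> carrier R. \<exists>a\<in>T. a \<otimes> c = \<zero>} R"
proof -
  let ?K = "{c \<in> carrier R. \<exists>a\<in>T. a \<otimes> c = \<zero>}"
  have Tc: "a \<in> carrier R" if "a \<in> T" for a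
    using that submonoid.subset[OF assms] by blast
  show ?thesis
  proof (rule idealI[OF ring_axioms])
    show "subgroup ?K (add_monoid R)"
    proof (rule add.subgroupI)
      show "?K \<subseteq> carrier R"
        by auto
      have "\<zero> \<in> ?K"
        using submonoid.one_closed[OF assms] by force
      then show "?K \<noteq> {}"
        by auto
    next
      fix c assume "c \<in> ?K"
      then obtain a where a: "a \<in> T" "a \<otimes> c = \<zero>" and c: "c \<in> carrier R"
        by auto
      have "a \<otimes> (\<ominus> c) = \<ominus> (a \<otimes> c)"
        using Tc[OF a(1)] c by (rule r_minus)
      then show "\<ominus> c \<in> ?K"
        using a c by auto
    next
      fix c d assume "c \<in> ?K" "d \<in> ?K"
      then obtain a b where ab: "a \<in> T" "a \<otimes> c = \<zero>" "b \<in> T" "b \<otimes> d = \<zero>"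
        and cd: "c \<in> carrier R" "d \<in> carrier R"
        by auto
      have "(a \<otimes> b) \<otimes> (c \<oplus> d) = b \<otimes> (a \<otimes> c) \<oplus> a \<otimes> (b \<otimes> d)"
        using Tc[OF ab(1)] Tc[OF ab(3)] cd by algebra
      also have "\<dots> = \<zero>"
        using Tc[OF ab(1)] Tc[OF ab(3)] ab(2,4) by simp
      finally show "c \<oplus> d \<in> ?K"
        using ab(1,3) cd submonoid.m_closed[OF assms] by auto
    qed
  next
    fix c x assume "c \<in> ?K" and x: "x \<in> carrier R"
    then obtain a where a: "a \<in> T" "a \<otimes> c = \<zero>" and c: "c \<in> carrier R"
      by auto
    have "a \<otimes> (x \<otimes> c) = x \<otimes> (a \<otimes> c)" "a \<otimes> (c \<otimes> x) = (a \<otimes> c) \<otimes> x"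
      using Tc[OF a(1)] c x by algebra+
    then show "x \<otimes> c \<in> ?K" "c \<otimes> x \<in> ?K"
      using a c x by auto
  qed
qed

text \<open>The conclusion says that x has an inverse of the form r/1 in the localisation of R at T;
  the hypothesis says that the kernel of the localisation map lies in no maximal ideal
  containing x.\<close>

lemma (in cring) inverse_modulo_annihilator:
  assumes T: "submonoid T R" and x: "x \<in> carrier R"
    and ann: "\<And>M. \<lbrakk>maximalideal M R; x \<in> M\<rbrakk> \<Longrightarrow> \<exists>a\<in>T. \<exists>c\<in>carrier R - M. a \<otimes> c = \<zero>"
  shows "\<exists>a\<in>T. \<exists>r\<in>carrier R. a \<otimes> (x \<otimes> r) = a"
proof -
  define K where "K = {c \<in> carrier R. \<exists>a\<in>T. a \<otimes> c = \<zero>}"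
  have K: "ideal K R"
    unfolding K_def using T by (rule ideal_annihilated_by_submonoid)
  have "\<one> \<in> K <+>\<^bsub>R\<^esub> PIdl x"
  proof (rule ccontr)
    assume "\<one> \<notin> K <+>\<^bsub>R\<^esub> PIdl x"
    then obtain M where M: "maximalideal M R" "K <+>\<^bsub>R\<^esub> PIdl x \<subseteq> M"
      using exists_maximalideal[OF add_ideals[OF K cgenideal_ideal[OF x]]] by blast
    then have "x \<in> M"
      using set_add_cgenideal_supset(2)[OF K x] by blast
    then obtain a c where "a \<in> T" "c \<in> carrier R" "c \<notin> M" "a \<otimes> c = \<zero>"
      using ann[OF M(1)] by blast
    then have "c \<in> K"
      unfolding K_def by blast
    moreover have "K \<subseteq> M"
      using M(2) set_add_cgenideal_supset(1)[OF K x] by blast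
    ultimately show False
      using \<open>c \<notin> M\<close> by blast
  qed
  then obtain c r where c: "c \<in> carrier R" "c \<in> K" and r: "r \<in> carrier R"
    and one: "\<one> = c \<oplus> r \<otimes> x"
    unfolding set_add_cgenideal K_def by blast
  obtain a where a: "a \<in> T" "a \<otimes> c = \<zero>"
    using c(2) unfolding K_def by blast
  have ac: "a \<in> carrier R"
    using a(1) submonoid.subset[OF T] by blast
  have "a = a \<otimes> (c \<oplus> r \<otimes> x)"
    using ac by (simp flip: one)
  also have "\<dots> = a \<otimes> c \<oplus> a \<otimes> (x \<otimes> r)"
    using ac r c(1) x by algebra
  also have "\<dots> = a \<otimes> (x \<otimes> r)"
    using ac r x a(2) by simp
  finally have "a \<otimes> (x \<otimes> r) = a"
    by (rule sym)
  with a(1) r show ?thesis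
    by blast
qed

lemma pm_ring_unique_maximal:
  assumes "pm_ring R" "primeideal P R"
    and "maximalideal M R" "P \<subseteq> M" "maximalideal M' R" "P \<subseteq> M'"
  shows "M = M'"
proof -
  have "\<exists>!M. maximalideal M R \<and> P \<subseteq> M"
    using assms(1,2) unfolding pm_ring_def by blast
  then show ?thesis
    using assms(3-6) by (metis (no_types, lifting))
qed

lemma (in cring) submonoid_products_outside_primeideals:
  assumes PM: "primeideal M R" and PN: "primeideal N R"
  shows "submonoid {a \<otimes> c | a c. a \<in> carrier R - M \<and> c \<in> carrier R - N} R"
    (is "submonoid ?S R")
proof
  show "?S \<subseteq> carrier R"
    by auto
  have "\<one> \<otimes> \<one> \<in> ?S"
    using primeideal.one_notin[OF PM] primeideal.one_notin[OF PN] by blast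
  then show "\<one> \<in> ?S"
    by simp
next
  fix x y assume "x \<in> ?S" "y \<in> ?S"
  then obtain a c b d where x: "x = a \<otimes> c" "a \<in> carrier R - M" "c \<in> carrier R - N"
    and y: "y = b \<otimes> d" "b \<in> carrier R - M" "d \<in> carrier R - N"
    by blast
  have "a \<otimes> b \<in> carrier R - M" "c \<otimes> d \<in> carrier R - N"
    using x y primeideal.I_prime[OF PM, of a b] primeideal.I_prime[OF PN, of c d] by auto
  then have "(a \<otimes> b) \<otimes> (c \<otimes> d) \<in> ?S"
    by blast
  moreover have "x \<otimes> y = (a \<otimes> b) \<otimes> (c \<otimes> d)"
    using x y by (simp add: m_lcomm m_assoc)
  ultimately show "x \<otimes> y \<in> ?S"
    by simp
qed

text \<open>A prime ideal missing all products a c with a outside M and c outside N lies in both M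
  and N, which the pm-property forbids.\<close>

lemma (in cring) pm_ring_separation:
  assumes pm: "pm_ring R" and M: "maximalideal M R" and N: "maximalideal N R" and "M \<noteq> N"
  shows "\<exists>a\<in>carrier R - M. \<exists>c\<in>carrier R - N. a \<otimes> c = \<zero>"
proof (rule ccontr)
  assume none: "\<not> ?thesis"
  have PM: "primeideal M R" and PN: "primeideal N R"
    using M N by (simp_all add: maximalideal_prime)
  let ?S = "{a \<otimes> c | a c. a \<in> carrier R - M \<and> c \<in> carrier R - N}"
  have "\<zero> \<notin> ?S"
  proof
    assume "\<zero> \<in> ?S"
    then obtain a c where "a \<in> carrier R - M" "c \<in> carrier R - N" "a \<otimes> c = \<zero>"
      by auto
    with none show False
      by blast
  qed
  then have "{\<zero>} \<inter> ?S = {}"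
    by simp
  then obtain P where P: "primeideal P R" "{\<zero>} \<subseteq> P" "P \<inter> ?S = {}"
    by (rule exists_primeideal_avoiding_submonoid[OF zeroideal submonoid_products_outside_primeideals[OF PM PN]])
  have "p \<in> M \<and> p \<in> N" if "p \<in> P" for p
  proof (rule ccontr)
    assume "\<not> (p \<in> M \<and> p \<in> N)"
    moreover have "p \<in> carrier R"
      using that ideal.Icarr[OF primeideal.axioms(1)[OF P(1)]] by blast
    moreover have "\<one> \<notin> M" "\<one> \<notin> N"
      using primeideal.one_notin[OF PM] primeideal.one_notin[OF PN] by simp_all
    ultimately have "p \<otimes> \<one> \<in> ?S \<or> \<one> \<otimes> p \<in> ?S"
      by blast
    then have "p \<in> ?S"
      using \<open>p \<in> carrier R\<close> by simp
    with that P(3) show False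
      by blast
  qed
  then have "M = N"
    using pm_ring_unique_maximal[OF pm P(1) M _ N] by auto
  with \<open>M \<noteq> N\<close> show False
    by contradiction
qed

lemma (in cring) pm_ring_inverse_modulo_annihilator:
  assumes pm: "pm_ring R" and N: "maximalideal N R" and s: "s \<in> carrier R" "s \<notin> N"
  shows "\<exists>a\<in>carrier R - N. \<exists>r\<in>carrier R. a \<otimes> (s \<otimes> r) = a"
proof (rule inverse_modulo_annihilator[OF _ s(1)])
  show "submonoid (carrier R - N) R"
    using N by (simp add: maximalideal_prime primeideal.submonoid_complement)
  fix M assume "maximalideal M R" "s \<in> M"
  then show "\<exists>a\<in>carrier R - N. \<exists>c\<in>carrier R - M. a \<otimes> c = \<zero>"
    using pm_ring_separation[OF pm N] s(2) by blast
qed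

lemma zariski_topspace:
  assumes "cring R"
  shows "topspace (zariski R) = Spec R"
proof -
  have "Spec R - zariski_V R {\<one>\<^bsub>R\<^esub>} = Spec R"
    unfolding zariski_V_def Spec_def using primeideal.one_notin by blast
  moreover have "{\<one>\<^bsub>R\<^esub>} \<subseteq> carrier R"
    using assms by (simp add: ring.ring_simprules(6) cring.axioms(1))
  ultimately have "Spec R \<in> {Spec R - zariski_V R S | S. S \<subseteq> carrier R}"
    by blast
  then show ?thesis
    unfolding zariski_def by auto
qed

lemma MaxSpec_subset_Spec: "cring R \<Longrightarrow> MaxSpec R \<subseteq> Spec R"
  unfolding MaxSpec_def Spec_def using cring.maximalideal_prime by blast

lemma max_zariski_topspace: "cring R \<Longrightarrow> topspace (max_zariski R) = MaxSpec R"
  unfolding max_zariski_def using zariski_topspace MaxSpec_subset_Spec by auto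

lemma openin_max_zariski_basic:
  assumes R: "cring R" and x: "x \<in> carrier R"
  shows "openin (max_zariski R) {M \<in> MaxSpec R. x \<notin> M}"
proof -
  have "openin (zariski R) (Spec R - zariski_V R {x})"
    unfolding zariski_def by (rule topology_generated_by_Basis) (use x in blast)
  moreover have "{M \<in> MaxSpec R. x \<notin> M} = (Spec R - zariski_V R {x}) \<inter> MaxSpec R"
    using MaxSpec_subset_Spec[OF R] unfolding zariski_V_def by auto
  ultimately show ?thesis
    unfolding max_zariski_def openin_subtopology by blast
qed

lemma continuous_map_max_zariskiI:
  assumes R: "cring R" and R': "cring R'"
    and maps: "\<And>M. M \<in> MaxSpec R \<Longrightarrow> f M \<in> MaxSpec R'"
    and local: "\<And>M y. \<lbrakk>M \<in> MaxSpec R; y \<in> carrier R'; y \<notin> f M\<rbrakk> \<Longrightarrow>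
      \<exists>x\<in>carrier R. x \<notin> M \<and> (\<forall>M'\<in>MaxSpec R. x \<notin> M' \<longrightarrow> y \<notin> f M')"
  shows "continuous_map (max_zariski R) (max_zariski R') f"
proof -
  have basic: "openin (max_zariski R) {M \<in> MaxSpec R. f M \<in> Spec R' - zariski_V R' S}"
    if S: "S \<subseteq> carrier R'" for S
  proof (rule openin_subopen[THEN iffD2], intro ballI)
    fix M assume "M \<in> {M \<in> MaxSpec R. f M \<in> Spec R' - zariski_V R' S}"
    then obtain y where M: "M \<in> MaxSpec R" and y: "y \<in> S" "y \<notin> f M"
      unfolding zariski_V_def by blast
    then obtain x where x: "x \<in> carrier R" "x \<notin> M"
      and nbhd: "\<And>M'. \<lbrakk>M' \<in> MaxSpec R; x \<notin> M'\<rbrakk> \<Longrightarrow> y \<notin> f M'"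
      using local[OF M] S by blast
    have "{M' \<in> MaxSpec R. x \<notin> M'} \<subseteq> {M \<in> MaxSpec R. f M \<in> Spec R' - zariski_V R' S}"
      using nbhd maps MaxSpec_subset_Spec[OF R'] y(1) unfolding zariski_V_def by blast
    then show "\<exists>T. openin (max_zariski R) T \<and> M \<in> T \<and>
        T \<subseteq> {M \<in> MaxSpec R. f M \<in> Spec R' - zariski_V R' S}"
      using openin_max_zariski_basic[OF R x(1)] M x(2) by blast
  qed
  have preimage: "openin (max_zariski R) {M \<in> MaxSpec R. f M \<in> T}" if "openin (zariski R') T" for T
  proof -
    have "generate_topology_on {Spec R' - zariski_V R' S | S. S \<subseteq> carrier R'} T"
      using that unfolding zariski_def openin_topology_generated_by_iff .
    then show ?thesis
    proof (induction rule: generate_topology_on.induct)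
      case Empty
      then show ?case
        by simp
    next
      case (Int a b)
      have "{M \<in> MaxSpec R. f M \<in> a \<inter> b} = {M \<in> MaxSpec R. f M \<in> a} \<inter> {M \<in> MaxSpec R. f M \<in> b}"
        by blast
      then show ?case
        using Int.IH by (simp add: openin_Int)
    next
      case (UN K)
      have "{M \<in> MaxSpec R. f M \<in> \<Union>K} = (\<Union>k\<in>K. {M \<in> MaxSpec R. f M \<in> k})"
        by blast
      then show ?case
        using UN.IH by (auto intro!: openin_Union)
    next
      case (Basis s)
      then show ?case
        using basic by blast
    qed
  qed
  show ?thesis
    unfolding continuous_map_def
  proof (intro conjI allI impI)
    show "f \<in> topspace (max_zariski R) \<rightarrow> topspace (max_zariski R')"
      using maps by (simp add: max_zariski_topspace[OF R] max_zariski_topspace[OF R'])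
    fix U assume "openin (max_zariski R') U"
    then obtain T where T: "openin (zariski R') T" "U = T \<inter> MaxSpec R'"
      unfolding max_zariski_def openin_subtopology by blast
    have "{M \<in> topspace (max_zariski R). f M \<in> U} = {M \<in> MaxSpec R. f M \<in> T}"
      using maps T(2) max_zariski_topspace[OF R] by auto
    then show "openin (max_zariski R) {M \<in> topspace (max_zariski R). f M \<in> U}"
      using preimage[OF T(1)] by simp
  qed
qed

lemma specialization_in_zariski_closure:
  assumes R: "cring R" and "P \<in> Spec R" "Q \<in> Spec R" "P \<subseteq> Q"
  shows "Q \<in> zariski R closure_of {P}"
proof -
  have "Q \<in> T \<longrightarrow> P \<in> T" if "openin (zariski R) T" for T
  proof -
    have "generate_topology_on {Spec R - zariski_V R S | S. S \<subseteq> carrier R} T"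
      using that unfolding zariski_def openin_topology_generated_by_iff .
    then show ?thesis
    proof (induction rule: generate_topology_on.induct)
      case (Basis s)
      then show ?case
        using assms(2,4) unfolding zariski_V_def by blast
    qed blast+
  qed
  then show ?thesis
    unfolding closure_of_def using zariski_topspace[OF R] assms(3) by blast
qed

lemma (in cring) cring_subring: "subring A R \<Longrightarrow> cring (R\<lparr>carrier := A\<rparr>)"
  using subcring_iff[OF subringE(1)] subcringI' by blast

lemma (in cring) primeideal_Int_subring:
  assumes A: "subring A R" and Q: "primeideal Q R"
  shows "primeideal (Q \<inter> A) (R\<lparr>carrier := A\<rparr>)"
proof -
  have hom: "ring_hom_ring (R\<lparr>carrier := A\<rparr>) R id"
    by (rule ring_hom_ringI)
      (use subring_is_ring[OF A] ring_axioms subringE(1)[OF A] subringE(3)[OF A] in auto)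
  have "primeideal {r \<in> A. id r \<in> Q} (R\<lparr>carrier := A\<rparr>)"
    using ring_hom_ring.primeideal_vimage[OF hom cring_subring[OF A] Q] by simp
  moreover have "{r \<in> A. id r \<in> Q} = Q \<inter> A"
    by auto
  ultimately show ?thesis
    by simp
qed

lemma (in cring) dense_subring_contractions_incomparable:
  assumes dense: "dense_subring A R" and M: "maximalideal M R" and M': "maximalideal M' R"
    and "M \<noteq> M'"
  shows "\<not> M \<inter> A \<subseteq> M' \<inter> A"
proof
  assume contr: "M \<inter> A \<subseteq> M' \<inter> A"
  interpret M: maximalideal M R by fact
  interpret M': primeideal M' R
    using M' by (rule maximalideal_prime)
  have "\<not> M \<subseteq> M'"
    using M.I_maximal[OF M'.is_ideal] M'.Icarr M'.I_notcarr \<open>M \<noteq> M'\<close> by blast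
  then obtain b where b: "b \<in> M" "b \<notin> M'"
    by blast
  then have "b \<in> carrier R - ring_rad R M'"
    using M.Icarr M'.ring_rad_eq by simp
  then obtain a where a: "a \<in> carrier R - ring_rad R M'" "a \<otimes> b \<in> A"
    using dense M'.is_ideal unfolding dense_subring_def by blast
  then have "a \<in> carrier R" "a \<notin> M'"
    using M'.ring_rad_eq by simp_all
  moreover have "a \<otimes> b \<in> M'"
    using contr a(2) M.I_l_closed[OF b(1) \<open>a \<in> carrier R\<close>] by blast
  ultimately show False
    using M'.I_prime M.Icarr b by blast
qed

locale pm_subring = cring +
  fixes A :: "'a set"
  assumes subring: "subring A R"
    and pm: "pm_ring (R\<lparr>carrier := A\<rparr>)"
begin

abbreviation R\<^sub>A :: "('a, 'b) ring_scheme"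
  where "R\<^sub>A \<equiv> R\<lparr>carrier := A\<rparr>"

lemma cring_R\<^sub>A: "cring R\<^sub>A"
  using subring by (rule cring_subring)

lemma submonoid_complement_maximalideal:
  assumes N: "maximalideal N R\<^sub>A"
  shows "submonoid (A - N) R"
proof -
  interpret N: primeideal N R\<^sub>A
    using N by (rule cring.maximalideal_prime[OF cring_R\<^sub>A])
  show ?thesis
    using N.submonoid_complement subringE(1)[OF subring]
    unfolding submonoid_def by auto
qed

definition max_contraction :: "'a set \<Rightarrow> 'a set"
  where "max_contraction M = (THE N. maximalideal N R\<^sub>A \<and> M \<inter> A \<subseteq> N)"

lemma ex1_maximalideal_above_contraction:
  "maximalideal M R \<Longrightarrow> \<exists>!N. maximalideal N R\<^sub>A \<and> M \<inter> A \<subseteq> N"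
  using pm primeideal_Int_subring[OF subring maximalideal_prime] unfolding pm_ring_def by blast

lemma max_contraction:
  assumes "maximalideal M R"
  shows "maximalideal (max_contraction M) R\<^sub>A" "M \<inter> A \<subseteq> max_contraction M"
  using theI'[OF ex1_maximalideal_above_contraction[OF assms]]
  unfolding max_contraction_def by auto

lemma exists_max_contraction_eq:
  assumes N: "maximalideal N R\<^sub>A"
  obtains M where "maximalideal M R" "max_contraction M = N"
proof -
  have "\<zero> \<in> N"
    using additive_subgroup.zero_closed[OF ideal.axioms(1)[OF maximalideal.axioms(1)[OF N]]]
    by simp
  then have "{\<zero>} \<inter> (A - N) = {}"
    by blast
  then obtain Q where Q: "primeideal Q R" "{\<zero>} \<subseteq> Q" "Q \<inter> (A - N) = {}"
    by (rule exists_primeideal_avoiding_submonoid[OF zeroideal submonoid_complement_maximalideal[OF N]])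
  then obtain M where M: "maximalideal M R" "Q \<subseteq> M"
    using exists_maximalideal[OF primeideal.axioms(1)] primeideal.one_notin by metis
  have "max_contraction M = N"
  proof (rule pm_ring_unique_maximal[OF pm primeideal_Int_subring[OF subring Q(1)]])
    show "maximalideal (max_contraction M) R\<^sub>A" "Q \<inter> A \<subseteq> max_contraction M"
      using max_contraction[OF M(1)] M(2) by blast+
    show "maximalideal N R\<^sub>A" "Q \<inter> A \<subseteq> N"
      using N Q(3) by blast+
  qed
  with M(1) show ?thesis
    by (rule that)
qed

lemma max_contraction_image: "max_contraction ` MaxSpec R = MaxSpec R\<^sub>A"
proof
  show "max_contraction ` MaxSpec R \<subseteq> MaxSpec R\<^sub>A"
    using max_contraction(1) unfolding MaxSpec_def by blast
  show "MaxSpec R\<^sub>A \<subseteq> max_contraction ` MaxSpec R"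
  proof
    fix N assume "N \<in> MaxSpec R\<^sub>A"
    then obtain M where "maximalideal M R" "max_contraction M = N"
      using exists_max_contraction_eq unfolding MaxSpec_def by blast
    then show "N \<in> max_contraction ` MaxSpec R"
      unfolding MaxSpec_def by blast
  qed
qed

lemma notin_max_contraction_if_inverse:
  assumes M: "maximalideal M R" and a: "a \<in> A" "a \<notin> M" and s: "s \<in> A" and r: "r \<in> A"
    and inv: "a \<otimes> (s \<otimes> r) = a"
  shows "s \<notin> max_contraction M"
proof
  assume "s \<in> max_contraction M"
  interpret M: primeideal M R
    using M by (rule maximalideal_prime)
  interpret N: primeideal "max_contraction M" R\<^sub>A
    using max_contraction(1)[OF M] by (rule cring.maximalideal_prime[OF cring_R\<^sub>A])
  have A: "A \<subseteq> carrier R"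
    using subringE(1)[OF subring] .
  then have carr: "a \<in> carrier R" "s \<in> carrier R" "r \<in> carrier R"
    using a(1) s r by auto
  define u where "u = \<one> \<ominus> s \<otimes> r"
  have "u \<in> A"
    unfolding u_def a_minus_def using subring r s by (simp add: subringE(3,5,6,7))
  have "a \<otimes> u = a \<ominus> a \<otimes> (s \<otimes> r)"
    unfolding u_def using carr by algebra
  also have "\<dots> = \<zero>"
    using carr by (simp add: inv a_minus_def r_neg)
  finally have "u \<in> M"
    using M.I_prime[of a u] M.zero_closed a(2) carr(1) \<open>u \<in> A\<close> A by auto
  then have "u \<in> max_contraction M"
    using \<open>u \<in> A\<close> max_contraction(2)[OF M] by blast
  moreover have "s \<otimes> r \<in> max_contraction M"
    using N.I_r_closed[OF \<open>s \<in> max_contraction M\<close>] r by simp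
  ultimately have "u \<oplus> s \<otimes> r \<in> max_contraction M"
    using additive_subgroup.a_closed[OF ideal.axioms(1)[OF N.is_ideal]] by simp
  moreover have "u \<oplus> s \<otimes> r = \<one>"
    unfolding u_def using carr by algebra
  ultimately show False
    using N.one_notin by simp
qed

lemma continuous_max_contraction:
  "continuous_map (max_zariski R) (max_zariski R\<^sub>A) max_contraction"
proof (rule continuous_map_max_zariskiI[OF is_cring cring_R\<^sub>A])
  show "max_contraction M \<in> MaxSpec R\<^sub>A" if "M \<in> MaxSpec R" for M
    using that max_contraction_image by blast
  fix M0 s assume M0: "M0 \<in> MaxSpec R" and s: "s \<in> carrier R\<^sub>A" "s \<notin> max_contraction M0"
  have M0': "maximalideal M0 R"
    using M0 unfolding MaxSpec_def by simp
  obtain a r where a: "a \<in> A" "a \<notin> max_contraction M0" and r: "r \<in> A"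
    and inv: "a \<otimes> (s \<otimes> r) = a"
    using cring.pm_ring_inverse_modulo_annihilator[OF cring_R\<^sub>A pm max_contraction(1)[OF M0'] s]
    by auto
  have "a \<notin> M0"
    using a max_contraction(2)[OF M0'] by blast
  moreover have "a \<in> carrier R"
    using a(1) subringE(1)[OF subring] by blast
  moreover have "s \<notin> max_contraction M" if "M \<in> MaxSpec R" "a \<notin> M" for M
    using notin_max_contraction_if_inverse[OF _ a(1) _ _ r inv] that s(1)
    unfolding MaxSpec_def by simp
  ultimately show "\<exists>x\<in>carrier R. x \<notin> M0 \<and> (\<forall>M\<in>MaxSpec R. x \<notin> M \<longrightarrow> s \<notin> max_contraction M)"
    by blast
qed

end

locale dense_wcn_subring = pm_subring +
  assumes dense: "dense_subring A R"
    and wcn: "weak_completely_normal_subring A R"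
begin

lemma inj_on_max_contraction: "inj_on max_contraction (MaxSpec R)"
proof
  fix M M' assume M: "M \<in> MaxSpec R" and M': "M' \<in> MaxSpec R"
    and eq: "max_contraction M = max_contraction M'"
  show "M = M'"
  proof (rule ccontr)
    assume "M \<noteq> M'"
    have max: "maximalideal M R" "maximalideal M' R"
      using M M' unfolding MaxSpec_def by simp_all
    have "\<not> M \<inter> A \<subseteq> M' \<inter> A" "\<not> M' \<inter> A \<subseteq> M \<inter> A"
      using dense_subring_contractions_incomparable[OF dense max(1,2) \<open>M \<noteq> M'\<close>]
        dense_subring_contractions_incomparable[OF dense max(2,1) \<open>M \<noteq> M'\<close>[symmetric]] by simp_all
    then have disjoint: "zariski R\<^sub>A closure_of {M \<inter> A} \<inter> zariski R\<^sub>A closure_of {M' \<inter> A} = {}"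
      using wcn max \<open>M \<noteq> M'\<close> unfolding weak_completely_normal_subring_def by blast
    let ?N = "max_contraction M"
    have N: "?N \<in> Spec R\<^sub>A"
      using max_contraction(1)[OF max(1)] cring.maximalideal_prime[OF cring_R\<^sub>A]
      unfolding Spec_def by blast
    have "M \<inter> A \<in> Spec R\<^sub>A" "M' \<inter> A \<in> Spec R\<^sub>A"
      using primeideal_Int_subring[OF subring] max maximalideal_prime unfolding Spec_def by blast+
    moreover have "M \<inter> A \<subseteq> ?N" "M' \<inter> A \<subseteq> ?N"
      using max_contraction(2)[OF max(1)] max_contraction(2)[OF max(2)] eq by simp_all
    ultimately have "?N \<in> zariski R\<^sub>A closure_of {M \<inter> A}" "?N \<in> zariski R\<^sub>A closure_of {M' \<inter> A}"
      using specialization_in_zariski_closure[OF cring_R\<^sub>A _ N] by simp_all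
    with disjoint show False
      by blast
  qed
qed

lemma bij_betw_max_contraction: "bij_betw max_contraction (MaxSpec R) (MaxSpec R\<^sub>A)"
  unfolding bij_betw_def using inj_on_max_contraction max_contraction_image by blast

abbreviation max_lift :: "'a set \<Rightarrow> 'a set"
  where "max_lift \<equiv> inv_into (MaxSpec R) max_contraction"

lemma max_lift:
  assumes "N \<in> MaxSpec R\<^sub>A"
  shows "max_lift N \<in> MaxSpec R" "max_contraction (max_lift N) = N" "max_lift N \<inter> A \<subseteq> N"
proof -
  show M: "max_lift N \<in> MaxSpec R"
    using bij_betwE[OF bij_betw_inv_into[OF bij_betw_max_contraction]] assms by blast
  show eq: "max_contraction (max_lift N) = N"
    using bij_betw_inv_into_right[OF bij_betw_max_contraction assms] .
  show "max_lift N \<inter> A \<subseteq> N"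
    using max_contraction(2) M eq unfolding MaxSpec_def by blast
qed

lemma max_lift_inverse_modulo_annihilator:
  assumes N0: "maximalideal N0 R\<^sub>A" and b: "b \<in> carrier R" "b \<notin> max_lift N0"
  shows "\<exists>a\<in>A - N0. \<exists>r\<in>carrier R. a \<otimes> (b \<otimes> r) = a"
proof (rule inverse_modulo_annihilator[OF submonoid_complement_maximalideal[OF N0] b(1)])
  fix M assume M: "maximalideal M R" "b \<in> M"
  have "max_contraction M \<noteq> N0"
  proof
    assume "max_contraction M = N0"
    then have "max_lift N0 = M"
      using bij_betw_inv_into_left[OF bij_betw_max_contraction] M(1) unfolding MaxSpec_def by blast
    with M(2) b(2) show False
      by simp
  qed
  then obtain a c where "a \<in> A - N0" "c \<in> A - max_contraction M" "a \<otimes> c = \<zero>"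
    using cring.pm_ring_separation[OF cring_R\<^sub>A pm N0 max_contraction(1)[OF M(1)]] by auto
  moreover have "c \<notin> M"
    using max_contraction(2)[OF M(1)] \<open>c \<in> A - max_contraction M\<close> by blast
  ultimately show "\<exists>a\<in>A - N0. \<exists>c\<in>carrier R - M. a \<otimes> c = \<zero>"
    using subringE(1)[OF subring] by blast
qed

lemma notin_max_lift_if_inverse:
  assumes N: "N \<in> MaxSpec R\<^sub>A" and a: "a \<in> A" "a \<notin> N" and r: "r \<in> carrier R"
    and inv: "a \<otimes> (b \<otimes> r) = a"
  shows "b \<notin> max_lift N"
proof
  assume "b \<in> max_lift N"
  have "maximalideal (max_lift N) R"
    using max_lift(1)[OF N] unfolding MaxSpec_def by simp
  then interpret M: ideal "max_lift N" R
    by (rule maximalideal.axioms(1))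
  have "a \<in> carrier R"
    using a(1) subringE(1)[OF subring] by blast
  then have "a \<otimes> (b \<otimes> r) \<in> max_lift N"
    by (intro M.I_l_closed M.I_r_closed \<open>b \<in> max_lift N\<close> r)
  then have "a \<in> max_lift N \<inter> A"
    using inv a(1) by simp
  with max_lift(3)[OF N] a(2) show False
    by blast
qed

lemma continuous_max_lift: "continuous_map (max_zariski R\<^sub>A) (max_zariski R) max_lift"
proof (rule continuous_map_max_zariskiI[OF cring_R\<^sub>A is_cring])
  show "max_lift N \<in> MaxSpec R" if "N \<in> MaxSpec R\<^sub>A" for N
    using that by (rule max_lift(1))
  fix N0 b assume N0: "N0 \<in> MaxSpec R\<^sub>A" and b: "b \<in> carrier R" "b \<notin> max_lift N0"
  obtain a r where a: "a \<in> A" "a \<notin> N0" and r: "r \<in> carrier R" and inv: "a \<otimes> (b \<otimes> r) = a"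
    using max_lift_inverse_modulo_annihilator[OF _ b] N0 unfolding MaxSpec_def by blast
  then have "\<forall>N\<in>MaxSpec R\<^sub>A. a \<notin> N \<longrightarrow> b \<notin> max_lift N"
    using notin_max_lift_if_inverse by blast
  with a show "\<exists>x\<in>carrier R\<^sub>A. x \<notin> N0 \<and> (\<forall>N\<in>MaxSpec R\<^sub>A. x \<notin> N \<longrightarrow> b \<notin> max_lift N)"
    by (intro bexI[of _ a]) simp_all
qed

lemma max_zariski_homeomorphic: "max_zariski R\<^sub>A homeomorphic_space max_zariski R"
  unfolding homeomorphic_space_def homeomorphic_maps_def
proof (intro exI conjI)
  show "continuous_map (max_zariski R\<^sub>A) (max_zariski R) max_lift"
    by (rule continuous_max_lift)
  show "continuous_map (max_zariski R) (max_zariski R\<^sub>A) max_contraction"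
    by (rule continuous_max_contraction)
  show "\<forall>N\<in>topspace (max_zariski R\<^sub>A). max_contraction (max_lift N) = N"
    using max_lift(2) max_zariski_topspace[OF cring_R\<^sub>A] by simp
  show "\<forall>M\<in>topspace (max_zariski R). max_lift (max_contraction M) = M"
    using bij_betw_inv_into_left[OF bij_betw_max_contraction] max_zariski_topspace[OF is_cring] by simp
qed

end

theorem theorem4p8:
  fixes B :: "('a, 'b) ring_scheme" and A :: "'a set"
  assumes "cring B"
    and "subring A B"
    and "pm_ring (B\<lparr>carrier := A\<rparr>)"
    and "dense_subring A B"
    and "weak_completely_normal_subring A B"
  shows "max_zariski (B\<lparr>carrier := A\<rparr>) homeomorphic_space max_zariski B"
proof -
  interpret dense_wcn_subring B A
    using assms by (simp add: dense_wcn_subring_def dense_wcn_subring_axioms_def pm_subring_def pm_subring_axioms_def)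
  show ?thesis
    by (rule max_zariski_homeomorphic)
qed

end
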